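(* Let $\mathcal A\in\mathbb C^{n\times n}$ be nonsingular and positive definite, suppose $\mathcal A=\mathcal P_1+\mathcal P_2$ with $\mathcal P_1,\mathcal P_2$ positive semidefinite, and let $\Sigma$ be Hermitian positive definite. Let $\Gamma_{\mathrm{PPS}}=(\Sigma+\mathcal P_1)^{-1}(\Sigma-\mathcal P_2)(\Sigma+\mathcal P_2)^{-1}(\Sigma-\mathcal P_1)$. If one of the following conditions holds, then $\rho(\Gamma_{\mathrm{PPS}})<1$: (1) $\mathrm{ev}(\Gamma_{\mathrm{PPS}})\cap\mathrm{null}(\mathcal P_1+\mathcal P_1^* )\subseteq\mathrm{null}(\mathcal P_1)$; (2) $\mathrm{ev}(\Gamma_{\mathrm{PPS}})\subseteq\mathrm{null}(\mathcal P_1)\cup\mathrm{null}(\mathcal P_2+\mathcal P_2^* )$.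
   Context: A matrix $\mathcal P\in\mathbb C^{n\times n}$ is called positive semidefinite if $\mathcal P+\mathcal P^*$ is Hermitian positive semidefinite, and positive definite if $\mathcal P+\mathcal P^*$ is Hermitian positive definite; $\mathcal P$ need not be Hermitian. $\rho(\cdot)$ is the spectral radius, $\mathrm{null}(\cdot)$ the null space, and $\mathrm{ev}(M)$ the set of all nonzero eigenvectors of a square matrix $M$. *)

theory Defs
  imports "Jordan_Normal_Form.Spectral_Radius" "Jordan_Normal_Form.Schur_Decomposition"
          "Jordan_Normal_Form.Gauss_Jordan_Elimination" "Jordan_Normal_Form.Matrix_Kernel"
begin

definition herm_psd :: "nat \<Rightarrow> complex mat \<Rightarrow> bool" where
  "herm_psd n H \<longleftrightarrow> H \<in> carrier_mat n n \<and> mat_adjoint H = H \<and>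
     (\<forall>v \<in> carrier_vec n. 0 \<le> Re (conjugate v \<bullet> (H *\<^sub>v v)))"

definition herm_pd :: "nat \<Rightarrow> complex mat \<Rightarrow> bool" where
  "herm_pd n H \<longleftrightarrow> H \<in> carrier_mat n n \<and> mat_adjoint H = H \<and>
     (\<forall>v \<in> carrier_vec n. v \<noteq> 0\<^sub>v n \<longrightarrow> 0 < Re (conjugate v \<bullet> (H *\<^sub>v v)))"

(* the paper's (non-Hermitian) notions: P is PSD / PD iff P + P^* is Hermitian PSD / PD *)
definition pos_semidef :: "nat \<Rightarrow> complex mat \<Rightarrow> bool" where
  "pos_semidef n P \<longleftrightarrow> P \<in> carrier_mat n n \<and> herm_psd n (P + mat_adjoint P)"

definition pos_def :: "nat \<Rightarrow> complex mat \<Rightarrow> bool" where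
  "pos_def n P \<longleftrightarrow> P \<in> carrier_mat n n \<and> herm_pd n (P + mat_adjoint P)"

definition ev :: "complex mat \<Rightarrow> complex vec set" where
  "ev M = {v. \<exists>k. eigenvector M v k}"

(* matrix inverse (meaningful for nonsingular square matrices) *)
definition minv :: "complex mat \<Rightarrow> complex mat" where
  "minv M = the (mat_inverse M)"

definition Gamma_PPS :: "complex mat \<Rightarrow> complex mat \<Rightarrow> complex mat \<Rightarrow> complex mat" where
  "Gamma_PPS \<Sigma> P1 P2 = minv (\<Sigma> + P1) * (\<Sigma> - P2) * minv (\<Sigma> + P2) * (\<Sigma> - P1)"

end

theory Submission
  imports Defs
begin

(* Let x be an eigenvector of Gamma_PPS for an eigenvalue l with |l| >= 1 and put
   u = (Sigma + P2)^-1 (Sigma - P1) x, so that (Sigma + P2) u = (Sigma - P1) x and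
   (Sigma - P2) u = l (Sigma + P1) x.  In the norm |w|^2 = w^* Sigma^-1 w the Cayley-type
   identity |(Sigma + P) z|^2 - |(Sigma - P) z|^2 = 4 Re (z^* P z), applied to P1, x and to
   P2, u, gives
     (1 - |l|^2) |(Sigma + P1) x|^2 = 4 (Re (x^* P1 x) + Re (u^* P2 u)).
   Both terms on the right are nonnegative, so both vanish.  Either condition of the theorem
   then yields P1 x = 0 or that the Hermitian part of P2 annihilates x; in the first case u is
   a nonzero multiple of x.  Hence Re (x^* P2 x) = 0 as well, and Re (x^* A x) = 0 contradicts
   the positive definiteness of A. *)

lemma mat_adjoint_carrier: "M \<in> carrier_mat n n \<Longrightarrow> mat_adjoint M \<in> carrier_mat n n"
  unfolding mat_adjoint_def by auto

lemma mat_adjoint_index: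
  "M \<in> carrier_mat n n \<Longrightarrow> i < n \<Longrightarrow> j < n \<Longrightarrow> mat_adjoint M $$ (i,j) = cnj (M $$ (j,i))"
  unfolding mat_adjoint_def by (auto simp: mat_of_rows_def)

lemma conjugate_mult_mat_vec_scalar_prod:
  fixes M :: "complex mat"
  assumes M: "M \<in> carrier_mat n n" and x: "x \<in> carrier_vec n" and y: "y \<in> carrier_vec n"
  shows "conjugate (M *\<^sub>v x) \<bullet> y = conjugate x \<bullet> (mat_adjoint M *\<^sub>v y)"
proof -
  have "conjugate (M *\<^sub>v x) \<bullet> y = (\<Sum>i<n. (\<Sum>j<n. cnj (M $$ (i,j)) * cnj (x $ j)) * y $ i)"
    using M x y
    by (auto simp: scalar_prod_def mult_mat_vec_def row_def lessThan_atLeast0 sum_conjugate)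
  also have "\<dots> = (\<Sum>j<n. \<Sum>i<n. cnj (x $ j) * (cnj (M $$ (i,j)) * y $ i))"
    by (subst sum.swap) (simp add: sum_distrib_left sum_distrib_right mult_ac)
  also have "\<dots> = conjugate x \<bullet> (mat_adjoint M *\<^sub>v y)"
    using M x y mat_adjoint_carrier[OF M]
    by (auto simp: scalar_prod_def mult_mat_vec_def row_def lessThan_atLeast0 mat_adjoint_index
        sum_distrib_left intro!: sum.cong)
  finally show ?thesis .
qed

lemma conjugate_scalar_prod_commute:
  fixes a b :: "complex vec"
  assumes "a \<in> carrier_vec n" "b \<in> carrier_vec n"
  shows "conjugate a \<bullet> b = cnj (conjugate b \<bullet> a)"
  using assms conjugate_conjugate_sprod[of b n a] conjugate_vec_sprod_comm[of b n a] by simp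

lemma conjugate_minus_vec:
  "a \<in> carrier_vec n \<Longrightarrow> b \<in> carrier_vec n \<Longrightarrow> conjugate (a - b) = conjugate a - (conjugate b :: complex vec)"
  by (intro eq_vecI) auto

lemma sesq_add_left:
  "a \<in> carrier_vec n \<Longrightarrow> b \<in> carrier_vec n \<Longrightarrow> c \<in> carrier_vec n \<Longrightarrow>
   conjugate (a + b) \<bullet> c = conjugate a \<bullet> c + conjugate b \<bullet> (c :: complex vec)"
  by (simp add: conjugate_add_vec add_scalar_prod_distrib[of _ n])

lemma sesq_minus_left:
  "a \<in> carrier_vec n \<Longrightarrow> b \<in> carrier_vec n \<Longrightarrow> c \<in> carrier_vec n \<Longrightarrow>
   conjugate (a - b) \<bullet> c = conjugate a \<bullet> c - conjugate b \<bullet> (c :: complex vec)"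
  by (simp add: conjugate_minus_vec minus_scalar_prod_distrib[of _ n])

lemma sesq_smult_left:
  "a \<in> carrier_vec n \<Longrightarrow> c \<in> carrier_vec n \<Longrightarrow>
   conjugate (k \<cdot>\<^sub>v a) \<bullet> c = cnj k * (conjugate a \<bullet> (c :: complex vec))"
  by (simp add: conjugate_smult_vec[of k a, simplified] smult_scalar_prod_distrib[of _ n])

lemma sesq_add_right:
  "a \<in> carrier_vec n \<Longrightarrow> b \<in> carrier_vec n \<Longrightarrow> c \<in> carrier_vec n \<Longrightarrow>
   conjugate a \<bullet> (b + c) = conjugate a \<bullet> b + conjugate a \<bullet> (c :: complex vec)"
  by (simp add: scalar_prod_add_distrib[of _ n])

lemma sesq_minus_right:
  "a \<in> carrier_vec n \<Longrightarrow> b \<in> carrier_vec n \<Longrightarrow> c \<in> carrier_vec n \<Longrightarrow>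
   conjugate a \<bullet> (b - c) = conjugate a \<bullet> b - conjugate a \<bullet> (c :: complex vec)"
  by (simp add: scalar_prod_minus_distrib[of _ n])

lemma sesq_smult_right:
  "a \<in> carrier_vec n \<Longrightarrow> c \<in> carrier_vec n \<Longrightarrow>
   conjugate a \<bullet> (k \<cdot>\<^sub>v c) = k * (conjugate a \<bullet> (c :: complex vec))"
  by (simp add: scalar_prod_smult_distrib[of _ n])

lemma Re_quadratic_form_plus_adjoint:
  fixes M :: "complex mat"
  assumes M: "M \<in> carrier_mat n n" and x: "x \<in> carrier_vec n"
  shows "Re (conjugate x \<bullet> ((M + mat_adjoint M) *\<^sub>v x)) = 2 * Re (conjugate x \<bullet> (M *\<^sub>v x))"
proof -
  have "conjugate x \<bullet> ((M + mat_adjoint M) *\<^sub>v x) = conjugate x \<bullet> (M *\<^sub>v x) + conjugate (M *\<^sub>v x) \<bullet> x"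
    using M x mat_adjoint_carrier[OF M] conjugate_mult_mat_vec_scalar_prod[OF M x x]
    by (simp add: add_mult_distrib_mat_vec sesq_add_right[of _ n])
  then show ?thesis
    using conjugate_scalar_prod_commute[of "M *\<^sub>v x" n x] M x by simp
qed

lemma Re_quadratic_form_smult:
  fixes M :: "complex mat"
  assumes "M \<in> carrier_mat n n" and "w \<in> carrier_vec n"
  shows "Re (conjugate (k \<cdot>\<^sub>v w) \<bullet> (M *\<^sub>v (k \<cdot>\<^sub>v w)))
       = (cmod k)\<^sup>2 * Re (conjugate w \<bullet> (M *\<^sub>v w))"
proof -
  have "conjugate (k \<cdot>\<^sub>v w) \<bullet> (M *\<^sub>v (k \<cdot>\<^sub>v w)) = (cnj k * k) * (conjugate w \<bullet> (M *\<^sub>v w))"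
    using assms by (simp add: mult_mat_vec[of _ n n] sesq_smult_left[of _ n] sesq_smult_right[of _ n])
  also have "cnj k * k = complex_of_real ((cmod k)\<^sup>2)"
    by (metis complex_norm_square mult.commute of_real_power)
  finally show ?thesis by simp
qed

lemma pos_semidef_Re_quadratic_form_nonneg:
  "pos_semidef n P \<Longrightarrow> x \<in> carrier_vec n \<Longrightarrow> 0 \<le> Re (conjugate x \<bullet> (P *\<^sub>v x))"
  using Re_quadratic_form_plus_adjoint[of P n x] unfolding pos_semidef_def herm_psd_def by force

lemma pos_def_Re_quadratic_form_pos:
  "pos_def n P \<Longrightarrow> x \<in> carrier_vec n \<Longrightarrow> x \<noteq> 0\<^sub>v n \<Longrightarrow> 0 < Re (conjugate x \<bullet> (P *\<^sub>v x))"
  using Re_quadratic_form_plus_adjoint[of P n x] unfolding pos_def_def herm_pd_def by force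

lemma herm_pd_mult_vec_eq_zero:
  "herm_pd n S \<Longrightarrow> v \<in> carrier_vec n \<Longrightarrow> S *\<^sub>v v = 0\<^sub>v n \<Longrightarrow> v = 0\<^sub>v n"
  unfolding herm_pd_def by force

(* A nonzero H v would make t \<mapsto> (v + t H v)^* H (v + t H v) = 2 t |H v|^2 + O(t^2) negative
   for small t < 0. *)
lemma herm_psd_quadratic_form_eq_zero:
  fixes H :: "complex mat"
  assumes H: "herm_psd n H" and v: "v \<in> carrier_vec n"
    and zero: "Re (conjugate v \<bullet> (H *\<^sub>v v)) = 0"
  shows "H *\<^sub>v v = 0\<^sub>v n"
proof (rule ccontr)
  assume ne: "H *\<^sub>v v \<noteq> 0\<^sub>v n"
  have Hc: "H \<in> carrier_mat n n" and Ha: "mat_adjoint H = H"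
    and nonneg: "\<And>y. y \<in> carrier_vec n \<Longrightarrow> 0 \<le> Re (conjugate y \<bullet> (H *\<^sub>v y))"
    using H unfolding herm_psd_def by auto
  define w where "w = H *\<^sub>v v"
  have w: "w \<in> carrier_vec n" using Hc v by (simp add: w_def)
  define a where "a = Re (conjugate w \<bullet> (H *\<^sub>v w))"
  define b where "b = Re (conjugate w \<bullet> w)"
  have a: "0 \<le> a" using nonneg[OF w] by (simp add: a_def)
  have "w \<bullet>c w > 0" using ne w by (simp add: w_def)
  hence b: "0 < b" using conjugate_vec_sprod_comm[OF w w] by (simp add: b_def less_complex_def)
  have vHw: "conjugate v \<bullet> (H *\<^sub>v w) = conjugate w \<bullet> w"
    using conjugate_mult_mat_vec_scalar_prod[OF Hc v w] Ha by (simp add: w_def)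
  have quadratic: "0 \<le> 2 * t * b + t\<^sup>2 * a" for t :: real
  proof -
    define z where "z = v + complex_of_real t \<cdot>\<^sub>v w"
    have z: "z \<in> carrier_vec n" using v w by (simp add: z_def)
    have Hz: "H *\<^sub>v z = w + complex_of_real t \<cdot>\<^sub>v (H *\<^sub>v w)"
      using Hc v w by (simp add: z_def mult_add_distrib_mat_vec[of _ n n] mult_mat_vec[of _ n n] w_def)
    have "conjugate z \<bullet> (H *\<^sub>v z) = conjugate v \<bullet> w + t * (conjugate v \<bullet> (H *\<^sub>v w))
       + t * (conjugate w \<bullet> w) + t * t * (conjugate w \<bullet> (H *\<^sub>v w))"
      unfolding Hz unfolding z_def using v w Hc
      by (simp add: sesq_add_left[of _ n] sesq_add_right[of _ n] sesq_smult_left[of _ n]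
          sesq_smult_right[of _ n] algebra_simps)
    hence "Re (conjugate z \<bullet> (H *\<^sub>v z)) = 2 * t * b + t\<^sup>2 * a"
      using zero by (simp add: vHw a_def b_def power2_eq_square algebra_simps w_def[symmetric])
    with nonneg[OF z] show ?thesis by simp
  qed
  have "2 * (- b / (a + 1)) * b + (- b / (a + 1))\<^sup>2 * a = b\<^sup>2 * (- a - 2) / (a + 1)\<^sup>2"
    using a by (simp add: power2_eq_square divide_simps) (simp add: algebra_simps)
  also have "\<dots> < 0" using a b by (intro divide_neg_pos mult_pos_neg) auto
  finally show False using quadratic[of "- b / (a + 1)"] by linarith
qed

lemma herm_pd_plus_pos_semidef_mult_vec_eq_zero:
  fixes S P :: "complex mat"
  assumes S: "herm_pd n S" and P: "pos_semidef n P" and v: "v \<in> carrier_vec n"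
    and zero: "(S + P) *\<^sub>v v = 0\<^sub>v n"
  shows "v = 0\<^sub>v n"
proof (rule ccontr)
  assume ne: "v \<noteq> 0\<^sub>v n"
  have Sc: "S \<in> carrier_mat n n" using S unfolding herm_pd_def by auto
  have Pc: "P \<in> carrier_mat n n" using P unfolding pos_semidef_def by auto
  have "0 < Re (conjugate v \<bullet> (S *\<^sub>v v))" using S v ne unfolding herm_pd_def by auto
  moreover have "0 \<le> Re (conjugate v \<bullet> (P *\<^sub>v v))"
    by (rule pos_semidef_Re_quadratic_form_nonneg[OF P v])
  moreover have "conjugate v \<bullet> (S *\<^sub>v v) + conjugate v \<bullet> (P *\<^sub>v v) = 0"
    using zero Sc Pc v by (simp flip: sesq_add_right[of _ n] add: add_mult_distrib_mat_vec[of _ n n])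
  ultimately show False by (metis add_pos_nonneg less_irrefl plus_complex.sel(1) zero_complex.sel(1))
qed

lemma minv_if_trivial_kernel:
  fixes M :: "complex mat"
  assumes M: "M \<in> carrier_mat n n"
    and inj: "\<And>v. v \<in> carrier_vec n \<Longrightarrow> M *\<^sub>v v = 0\<^sub>v n \<Longrightarrow> v = 0\<^sub>v n"
  shows "M * minv M = 1\<^sub>m n" "minv M * M = 1\<^sub>m n" "minv M \<in> carrier_mat n n"
proof -
  have "det M \<noteq> 0" using det_0_iff_vec_prod_zero[OF M] inj by auto
  then have "M \<in> Units (ring_mat TYPE(complex) n n)" by (rule det_non_zero_imp_unit[OF M])
  then obtain B where B: "mat_inverse M = Some B"
    using mat_inverse(1)[OF M, of n] by (cases "mat_inverse M") auto
  show "M * minv M = 1\<^sub>m n" "minv M * M = 1\<^sub>m n" "minv M \<in> carrier_mat n n"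
    using mat_inverse(2)[OF M B] B by (simp_all add: minv_def)
qed

lemma herm_pd_mult_vec_inj:
  fixes S :: "complex mat"
  assumes S: "herm_pd n S" and u: "u \<in> carrier_vec n" and v: "v \<in> carrier_vec n"
    and eq: "S *\<^sub>v u = S *\<^sub>v v"
  shows "u = v"
proof -
  have Sc: "S \<in> carrier_mat n n" using S unfolding herm_pd_def by auto
  have "S *\<^sub>v (u - v) = 0\<^sub>v n" using Sc u v eq by (simp add: mult_minus_distrib_mat_vec[of _ n n])
  then have "u - v = 0\<^sub>v n" using herm_pd_mult_vec_eq_zero[OF S] u v by simp
  then show ?thesis using u v by (auto simp: vec_eq_iff)
qed

lemma herm_pd_minv:
  assumes "herm_pd n S"
  shows "S * minv S = 1\<^sub>m n" "minv S * S = 1\<^sub>m n" "minv S \<in> carrier_mat n n"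
  using minv_if_trivial_kernel[of S n] herm_pd_mult_vec_eq_zero[OF assms] assms
  unfolding herm_pd_def by auto

lemma herm_pd_plus_pos_semidef_minv:
  assumes "herm_pd n S" "pos_semidef n P"
  shows "(S + P) * minv (S + P) = 1\<^sub>m n" "minv (S + P) \<in> carrier_mat n n"
  using minv_if_trivial_kernel[of "S + P" n] herm_pd_plus_pos_semidef_mult_vec_eq_zero[OF assms] assms
  unfolding herm_pd_def pos_semidef_def by auto

definition inv_quad_form :: "complex mat \<Rightarrow> complex vec \<Rightarrow> real" where
  "inv_quad_form S w = Re (conjugate w \<bullet> (minv S *\<^sub>v w))"

lemma inv_quad_form_pos:
  assumes S: "herm_pd n S" and w: "w \<in> carrier_vec n" and ne: "w \<noteq> 0\<^sub>v n"
  shows "0 < inv_quad_form S w"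
proof -
  have Sc: "S \<in> carrier_mat n n" and Sa: "mat_adjoint S = S" using S unfolding herm_pd_def by auto
  define y where "y = minv S *\<^sub>v w"
  have y: "y \<in> carrier_vec n" using herm_pd_minv(3)[OF S] w by (simp add: y_def)
  have wy: "w = S *\<^sub>v y"
    using Sc herm_pd_minv[OF S] w unfolding y_def by (simp flip: assoc_mult_mat_vec)
  have "y \<noteq> 0\<^sub>v n" using wy ne Sc by auto
  moreover have "conjugate w \<bullet> (minv S *\<^sub>v w) = conjugate y \<bullet> (S *\<^sub>v y)"
    using conjugate_mult_mat_vec_scalar_prod[OF Sc y y] Sa by (simp add: y_def[symmetric] flip: wy)
  ultimately show ?thesis using S y unfolding herm_pd_def inv_quad_form_def by auto
qed

lemma inv_quad_form_smult:
  "herm_pd n S \<Longrightarrow> w \<in> carrier_vec n \<Longrightarrow> inv_quad_form S (k \<cdot>\<^sub>v w) = (cmod k)\<^sup>2 * inv_quad_form S w"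
  unfolding inv_quad_form_def by (rule Re_quadratic_form_smult[OF herm_pd_minv(3)])

lemma inv_quad_form_plus_minus:
  fixes S P :: "complex mat"
  assumes S: "herm_pd n S" and P: "P \<in> carrier_mat n n" and z: "z \<in> carrier_vec n"
  shows "inv_quad_form S ((S + P) *\<^sub>v z) - inv_quad_form S ((S - P) *\<^sub>v z)
       = 4 * Re (conjugate z \<bullet> (P *\<^sub>v z))"
proof -
  have Sc: "S \<in> carrier_mat n n" and Sa: "mat_adjoint S = S" using S unfolding herm_pd_def by auto
  define T where "T = minv S"
  have T: "T \<in> carrier_mat n n" "S * T = 1\<^sub>m n" "T * S = 1\<^sub>m n"
    using herm_pd_minv[OF S] by (auto simp: T_def)
  define a where "a = S *\<^sub>v z"
  define b where "b = P *\<^sub>v z"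
  have a: "a \<in> carrier_vec n" and b: "b \<in> carrier_vec n" using Sc P z by (auto simp: a_def b_def)
  have Tab: "T *\<^sub>v a \<in> carrier_vec n" "T *\<^sub>v b \<in> carrier_vec n" using T a b by auto
  have "(S + P) *\<^sub>v z = a + b" "(S - P) *\<^sub>v z = a - b"
    using Sc P z by (simp_all add: a_def b_def add_mult_distrib_mat_vec[of _ n n]
        minus_mult_distrib_mat_vec[of _ n n])
  moreover have "T *\<^sub>v (a + b) = T *\<^sub>v a + T *\<^sub>v b" "T *\<^sub>v (a - b) = T *\<^sub>v a - T *\<^sub>v b"
    using T a b by (simp_all add: mult_add_distrib_mat_vec[of _ n n] mult_minus_distrib_mat_vec[of _ n n])
  moreover have "conjugate a \<bullet> (T *\<^sub>v b) = conjugate z \<bullet> b"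
  proof -
    have "conjugate a \<bullet> (T *\<^sub>v b) = conjugate z \<bullet> (S *\<^sub>v (T *\<^sub>v b))"
      using conjugate_mult_mat_vec_scalar_prod[OF Sc z Tab(2)] Sa by (simp add: a_def)
    also have "S *\<^sub>v (T *\<^sub>v b) = b" using Sc T b by (simp flip: assoc_mult_mat_vec)
    finally show ?thesis .
  qed
  moreover have "T *\<^sub>v a = z" using Sc T z unfolding a_def by (simp flip: assoc_mult_mat_vec)
  ultimately have "inv_quad_form S ((S + P) *\<^sub>v z) - inv_quad_form S ((S - P) *\<^sub>v z)
      = 2 * Re (conjugate z \<bullet> b + conjugate b \<bullet> z)"
    using a b Tab unfolding inv_quad_form_def T_def[symmetric]
    by (simp add: sesq_add_left[of _ n] sesq_add_right[of _ n] sesq_minus_left[of _ n]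
        sesq_minus_right[of _ n] algebra_simps)
  then show ?thesis
    using conjugate_scalar_prod_commute[OF b z] by (simp add: b_def)
qed

lemma herm_pd_plus_minus_system_solution:
  fixes S P :: "complex mat"
  assumes S: "herm_pd n S" and P: "P \<in> carrier_mat n n"
    and x: "x \<in> carrier_vec n" and u: "u \<in> carrier_vec n"
    and plus: "(S + P) *\<^sub>v u = S *\<^sub>v x" and minus: "(S - P) *\<^sub>v u = l \<cdot>\<^sub>v (S *\<^sub>v x)"
  shows "u = ((1 + l) / 2) \<cdot>\<^sub>v x"
proof (rule herm_pd_mult_vec_inj[OF S u])
  have Sc: "S \<in> carrier_mat n n" using S unfolding herm_pd_def by auto
  show "S *\<^sub>v u = S *\<^sub>v (((1 + l) / 2) \<cdot>\<^sub>v x)"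
  proof (rule eq_vecI)
    fix i assume "i < dim_vec (S *\<^sub>v (((1 + l) / 2) \<cdot>\<^sub>v x))"
    then have i: "i < n" using Sc by simp
    have "(S *\<^sub>v u) $ i + (P *\<^sub>v u) $ i = (S *\<^sub>v x) $ i"
      using arg_cong[OF plus, of "\<lambda>w. w $ i"] i Sc P u by (simp add: add_mult_distrib_mat_vec[of _ n n])
    moreover have "(S *\<^sub>v u) $ i - (P *\<^sub>v u) $ i = l * (S *\<^sub>v x) $ i"
      using arg_cong[OF minus, of "\<lambda>w. w $ i"] i Sc P u by (simp add: minus_mult_distrib_mat_vec[of _ n n])
    ultimately show "(S *\<^sub>v u) $ i = (S *\<^sub>v (((1 + l) / 2) \<cdot>\<^sub>v x)) $ i"
      using i Sc x by (simp add: mult_mat_vec[of _ n n] field_simps)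
  qed (use Sc in simp)
qed (use x in simp)

lemma Gamma_PPS_carrier:
  assumes "herm_pd n \<Sigma>" "pos_semidef n P1" "pos_semidef n P2"
  shows "Gamma_PPS \<Sigma> P1 P2 \<in> carrier_mat n n"
  using herm_pd_plus_pos_semidef_minv(2)[OF assms(1,2)] herm_pd_plus_pos_semidef_minv(2)[OF assms(1,3)]
    assms unfolding Gamma_PPS_def herm_pd_def pos_semidef_def by auto

lemma Gamma_PPS_eigenvector_factor:
  fixes \<Sigma> P1 P2 :: "complex mat"
  assumes \<Sigma>: "herm_pd n \<Sigma>" and P1: "pos_semidef n P1" and P2: "pos_semidef n P2"
    and x: "x \<in> carrier_vec n" and Gx: "Gamma_PPS \<Sigma> P1 P2 *\<^sub>v x = l \<cdot>\<^sub>v x"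
  obtains u where "u \<in> carrier_vec n" "(\<Sigma> + P2) *\<^sub>v u = (\<Sigma> - P1) *\<^sub>v x"
    "(\<Sigma> - P2) *\<^sub>v u = l \<cdot>\<^sub>v ((\<Sigma> + P1) *\<^sub>v x)"
proof
  have \<Sigma>c: "\<Sigma> \<in> carrier_mat n n" and P1c: "P1 \<in> carrier_mat n n" and P2c: "P2 \<in> carrier_mat n n"
    using \<Sigma> P1 P2 unfolding herm_pd_def pos_semidef_def by auto
  define B1 where "B1 = minv (\<Sigma> + P1)"
  define B2 where "B2 = minv (\<Sigma> + P2)"
  have B1: "B1 \<in> carrier_mat n n" "(\<Sigma> + P1) * B1 = 1\<^sub>m n"
    using herm_pd_plus_pos_semidef_minv[OF \<Sigma> P1] by (auto simp: B1_def)
  have B2: "B2 \<in> carrier_mat n n" "(\<Sigma> + P2) * B2 = 1\<^sub>m n"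
    using herm_pd_plus_pos_semidef_minv[OF \<Sigma> P2] by (auto simp: B2_def)
  have \<Sigma>P: "\<Sigma> + P1 \<in> carrier_mat n n" "\<Sigma> - P1 \<in> carrier_mat n n" "\<Sigma> - P2 \<in> carrier_mat n n"
    using \<Sigma>c P1c P2c by (auto intro: minus_carrier_mat)
  define v where "v = (\<Sigma> - P1) *\<^sub>v x"
  have v: "v \<in> carrier_vec n" using \<Sigma>P x by (simp add: v_def)
  define u where "u = B2 *\<^sub>v v"
  show u: "u \<in> carrier_vec n" using B2 v by (simp add: u_def)
  have "(\<Sigma> + P2) *\<^sub>v u = ((\<Sigma> + P2) * B2) *\<^sub>v v"
    unfolding u_def using B2 \<Sigma>c P2c v by (simp flip: assoc_mult_mat_vec[of _ n n _ n])
  then show "(\<Sigma> + P2) *\<^sub>v u = (\<Sigma> - P1) *\<^sub>v x"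
    using B2 v by (simp add: v_def)
  have "Gamma_PPS \<Sigma> P1 P2 *\<^sub>v x = B1 *\<^sub>v ((\<Sigma> - P2) *\<^sub>v u)"
    using B1 B2 \<Sigma>P x
    by (simp add: Gamma_PPS_def B1_def[symmetric] B2_def[symmetric] u_def v_def
        assoc_mult_mat_vec[of _ n n _ n] mult_carrier_mat[of _ n n])
  then have "(\<Sigma> + P1) *\<^sub>v (l \<cdot>\<^sub>v x) = (\<Sigma> + P1) *\<^sub>v (B1 *\<^sub>v ((\<Sigma> - P2) *\<^sub>v u))"
    by (simp add: Gx)
  then have "l \<cdot>\<^sub>v ((\<Sigma> + P1) *\<^sub>v x) = (\<Sigma> + P1) *\<^sub>v (B1 *\<^sub>v ((\<Sigma> - P2) *\<^sub>v u))"
    using \<Sigma>P x by (simp add: mult_mat_vec[of _ n n])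
  also have "\<dots> = ((\<Sigma> + P1) * B1) *\<^sub>v ((\<Sigma> - P2) *\<^sub>v u)"
    using B1 \<Sigma>P u by (intro assoc_mult_mat_vec[symmetric, of _ n n _ n]) auto
  finally show "(\<Sigma> - P2) *\<^sub>v u = l \<cdot>\<^sub>v ((\<Sigma> + P1) *\<^sub>v x)"
    using B1 \<Sigma>P u by simp
qed

lemma PPS_energy_balance:
  fixes \<Sigma> P1 P2 :: "complex mat"
  assumes \<Sigma>: "herm_pd n \<Sigma>" and P1: "P1 \<in> carrier_mat n n" and P2: "P2 \<in> carrier_mat n n"
    and x: "x \<in> carrier_vec n" and u: "u \<in> carrier_vec n"
    and plus: "(\<Sigma> + P2) *\<^sub>v u = (\<Sigma> - P1) *\<^sub>v x"
    and minus: "(\<Sigma> - P2) *\<^sub>v u = l \<cdot>\<^sub>v ((\<Sigma> + P1) *\<^sub>v x)"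
  shows "(1 - (cmod l)\<^sup>2) * inv_quad_form \<Sigma> ((\<Sigma> + P1) *\<^sub>v x)
       = 4 * (Re (conjugate x \<bullet> (P1 *\<^sub>v x)) + Re (conjugate u \<bullet> (P2 *\<^sub>v u)))"
proof -
  have \<Sigma>c: "\<Sigma> \<in> carrier_mat n n" using \<Sigma> unfolding herm_pd_def by auto
  have "inv_quad_form \<Sigma> (l \<cdot>\<^sub>v ((\<Sigma> + P1) *\<^sub>v x)) = (cmod l)\<^sup>2 * inv_quad_form \<Sigma> ((\<Sigma> + P1) *\<^sub>v x)"
    using \<Sigma>c P1 x by (intro inv_quad_form_smult[OF \<Sigma>]) (auto intro!: mult_mat_vec_carrier)
  then show ?thesis
    using inv_quad_form_plus_minus[OF \<Sigma> P1 x] inv_quad_form_plus_minus[OF \<Sigma> P2 u]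
    unfolding plus minus by (simp add: algebra_simps)
qed

lemma PPS_unimodular_forms_vanish:
  fixes \<Sigma> P1 P2 :: "complex mat"
  assumes \<Sigma>: "herm_pd n \<Sigma>" and P1: "pos_semidef n P1" and P2: "pos_semidef n P2"
    and x: "x \<in> carrier_vec n" "x \<noteq> 0\<^sub>v n" and u: "u \<in> carrier_vec n"
    and plus: "(\<Sigma> + P2) *\<^sub>v u = (\<Sigma> - P1) *\<^sub>v x"
    and minus: "(\<Sigma> - P2) *\<^sub>v u = l \<cdot>\<^sub>v ((\<Sigma> + P1) *\<^sub>v x)"
    and l: "1 \<le> cmod l"
  shows "Re (conjugate x \<bullet> (P1 *\<^sub>v x)) = 0" "Re (conjugate u \<bullet> (P2 *\<^sub>v u)) = 0"
proof -
  have \<Sigma>c: "\<Sigma> \<in> carrier_mat n n" and P1c: "P1 \<in> carrier_mat n n" and P2c: "P2 \<in> carrier_mat n n"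
    using \<Sigma> P1 P2 unfolding herm_pd_def pos_semidef_def by auto
  have "(\<Sigma> + P1) *\<^sub>v x \<noteq> 0\<^sub>v n"
    using herm_pd_plus_pos_semidef_mult_vec_eq_zero[OF \<Sigma> P1 x(1)] x(2) by blast
  then have "0 < inv_quad_form \<Sigma> ((\<Sigma> + P1) *\<^sub>v x)"
    using \<Sigma>c P1c x by (intro inv_quad_form_pos[OF \<Sigma>]) (auto intro!: mult_mat_vec_carrier)
  moreover have "1 - (cmod l)\<^sup>2 \<le> 0" using l by (simp add: one_le_power)
  ultimately have "4 * (Re (conjugate x \<bullet> (P1 *\<^sub>v x)) + Re (conjugate u \<bullet> (P2 *\<^sub>v u))) \<le> 0"
    unfolding PPS_energy_balance[OF \<Sigma> P1c P2c x(1) u plus minus, symmetric]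
    by (simp add: mult_nonpos_nonneg)
  then show "Re (conjugate x \<bullet> (P1 *\<^sub>v x)) = 0" "Re (conjugate u \<bullet> (P2 *\<^sub>v u)) = 0"
    using pos_semidef_Re_quadratic_form_nonneg[OF P1 x(1)] pos_semidef_Re_quadratic_form_nonneg[OF P2 u]
    by auto
qed

lemma PPS_P2_form_vanish:
  fixes \<Sigma> P1 P2 :: "complex mat"
  assumes \<Sigma>: "herm_pd n \<Sigma>" and P1: "P1 \<in> carrier_mat n n" and P2: "P2 \<in> carrier_mat n n"
    and x: "x \<in> carrier_vec n" "x \<noteq> 0\<^sub>v n" and u: "u \<in> carrier_vec n"
    and plus: "(\<Sigma> + P2) *\<^sub>v u = (\<Sigma> - P1) *\<^sub>v x"
    and minus: "(\<Sigma> - P2) *\<^sub>v u = l \<cdot>\<^sub>v ((\<Sigma> + P1) *\<^sub>v x)"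
    and u_form: "Re (conjugate u \<bullet> (P2 *\<^sub>v u)) = 0"
    and kernel: "P1 *\<^sub>v x = 0\<^sub>v n \<or> (P2 + mat_adjoint P2) *\<^sub>v x = 0\<^sub>v n"
  shows "Re (conjugate x \<bullet> (P2 *\<^sub>v x)) = 0"
  using kernel
proof
  assume "(P2 + mat_adjoint P2) *\<^sub>v x = 0\<^sub>v n"
  then show ?thesis using Re_quadratic_form_plus_adjoint[OF P2 x(1)] x(1) by simp
next
  assume P1x: "P1 *\<^sub>v x = 0\<^sub>v n"
  have \<Sigma>c: "\<Sigma> \<in> carrier_mat n n" using \<Sigma> unfolding herm_pd_def by auto
  define c where "c = (1 + l) / 2"
  have "(\<Sigma> + P1) *\<^sub>v x = \<Sigma> *\<^sub>v x" "(\<Sigma> - P1) *\<^sub>v x = \<Sigma> *\<^sub>v x"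
    using \<Sigma>c P1 x P1x by (simp_all add: add_mult_distrib_mat_vec[of _ n n] minus_mult_distrib_mat_vec[of _ n n])
  then have uc: "u = c \<cdot>\<^sub>v x"
    using herm_pd_plus_minus_system_solution[OF \<Sigma> P2 x(1) u] plus minus by (simp add: c_def)
  have "\<Sigma> *\<^sub>v x = c \<cdot>\<^sub>v ((\<Sigma> + P2) *\<^sub>v x)"
    using plus \<Sigma>c P2 x(1) \<open>(\<Sigma> - P1) *\<^sub>v x = \<Sigma> *\<^sub>v x\<close> by (simp add: uc mult_mat_vec[of _ n n])
  then have "c \<noteq> 0"
    using herm_pd_mult_vec_eq_zero[OF \<Sigma> x(1)] x(2) \<Sigma>c by (auto simp: vec_eq_iff)
  have "Re (conjugate u \<bullet> (P2 *\<^sub>v u)) = (cmod c)\<^sup>2 * Re (conjugate x \<bullet> (P2 *\<^sub>v x))"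
    unfolding uc by (rule Re_quadratic_form_smult[OF P2 x(1)])
  then show ?thesis using u_form \<open>c \<noteq> 0\<close> by simp
qed

theorem theorem3p7:
  fixes n :: nat and A P1 P2 \<Sigma> :: "complex mat"
  assumes "0 < n" and "A \<in> carrier_mat n n" and "invertible_mat A" and "pos_def n A"
    and "A = P1 + P2"
    and "pos_semidef n P1" and "pos_semidef n P2"
    and "herm_pd n \<Sigma>"
    and "ev (Gamma_PPS \<Sigma> P1 P2) \<inter> mat_kernel (P1 + mat_adjoint P1) \<subseteq> mat_kernel P1
         \<or> ev (Gamma_PPS \<Sigma> P1 P2) \<subseteq> mat_kernel P1 \<union> mat_kernel (P2 + mat_adjoint P2)"
  shows "spectral_radius (Gamma_PPS \<Sigma> P1 P2) < 1"
proof -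
  note P1 = assms(6) and P2 = assms(7) and \<Sigma> = assms(8)
  let ?G = "Gamma_PPS \<Sigma> P1 P2"
  have G: "?G \<in> carrier_mat n n" by (rule Gamma_PPS_carrier[OF \<Sigma> P1 P2])
  have P1c: "P1 \<in> carrier_mat n n" and P2c: "P2 \<in> carrier_mat n n"
    using P1 P2 unfolding pos_semidef_def by auto
  have "cmod l < 1" if "eigenvalue ?G l" for l
  proof (rule ccontr)
    assume "\<not> cmod l < 1"
    then have l: "1 \<le> cmod l" by simp
    obtain x where eig: "eigenvector ?G x l" using \<open>eigenvalue ?G l\<close> unfolding eigenvalue_def by blast
    then have x: "x \<in> carrier_vec n" "x \<noteq> 0\<^sub>v n" and Gx: "?G *\<^sub>v x = l \<cdot>\<^sub>v x"
      using G unfolding eigenvector_def by auto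
    obtain u where u: "u \<in> carrier_vec n" and plus: "(\<Sigma> + P2) *\<^sub>v u = (\<Sigma> - P1) *\<^sub>v x"
      and minus: "(\<Sigma> - P2) *\<^sub>v u = l \<cdot>\<^sub>v ((\<Sigma> + P1) *\<^sub>v x)"
      using Gamma_PPS_eigenvector_factor[OF \<Sigma> P1 P2 x(1) Gx] by blast
    have P1x: "Re (conjugate x \<bullet> (P1 *\<^sub>v x)) = 0" and P2u: "Re (conjugate u \<bullet> (P2 *\<^sub>v u)) = 0"
      using PPS_unimodular_forms_vanish[OF \<Sigma> P1 P2 x u plus minus l] by auto
    have "(P1 + mat_adjoint P1) *\<^sub>v x = 0\<^sub>v n"
      using P1 x P1x Re_quadratic_form_plus_adjoint[OF P1c x(1)]
      by (intro herm_psd_quadratic_form_eq_zero) (auto simp: pos_semidef_def)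
    then have "P1 *\<^sub>v x = 0\<^sub>v n \<or> (P2 + mat_adjoint P2) *\<^sub>v x = 0\<^sub>v n"
      using assms(9) eig x(1) P1c P2c mat_adjoint_carrier[OF P1c] mat_adjoint_carrier[OF P2c]
      by (auto simp: ev_def mat_kernel_def)
    then have "Re (conjugate x \<bullet> (P2 *\<^sub>v x)) = 0"
      by (rule PPS_P2_form_vanish[OF \<Sigma> P1c P2c x u plus minus P2u])
    then have "Re (conjugate x \<bullet> (A *\<^sub>v x)) = 0"
      using P1x P1c P2c x(1)
      by (simp add: assms(5) add_mult_distrib_mat_vec[of _ n n] sesq_add_right[of _ n])
    with pos_def_Re_quadratic_form_pos[OF assms(4) x] show False by simp
  qed
  then show ?thesis
    using spectral_radius_mem_max(1)[OF G assms(1)] by (auto simp: spectrum_def)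
qed

end
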